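(* Let $n\ge2$ be an integer. Let $a_{k,j}$ ($0\le j\le k\le n$) be the coefficients of $p(k,x)=\sum_{j=0}^{k}a_{k,j}x^j$. Let $m=n-1$ if $n$ is odd and $m=n$ if $n$ is even. Define $\alpha_m,\alpha_{m-2},\dots,\alpha_0$ by $$\alpha_m=-\frac{4}{\pi}c_{n,m}a_{m,0},\qquad \alpha_{m-2i}=\frac{(m-2i+2)\alpha_{m-2i+2}}{2}-\frac{4}{\pi}c_{n,m-2i}a_{m-2i,0}\ \ \Big(i\in\{1,\dots,\tfrac m2-1\}\Big),\qquad \alpha_0=\alpha_2-\frac{4}{\pi}c_{n,0}a_{0,0},$$ and $\beta_{2n},\beta_{2n-2},\dots,\beta_0$ by $$\beta_{2n}=-\frac{2}{\pi}(-1)^n c_{n,n}a_{n,n},\qquad \beta_{2n-2i}=\frac{(n-i+1)\beta_{2n-2i+2}}{2}-\frac{2}{\pi}\sum_{k=n-i}^{\min\{2n-2i,\,n\}}(-1)^k c_{n,k}a_{k,2(n-i)-k}\ \ (i\in\{1,\dots,n-1\}),$$ $$\beta_0=\frac{\beta_2}{2}-\frac{2}{\pi}c_{n,0}a_{0,0}.$$ Set $p_{n,1}(x)=\alpha_0+\alpha_2x^2+\dots+\alpha_mx^m$, $p_{n,2}(x)=\beta_0+\beta_2x^2+\dots+\beta_{2n}x^{2n}$, $p_{n,0}=-(\alpha_0+\beta_0)$, and for $x\ge0$ $$f_n(x)=\sqrt{p_{n,0}+p_{n,1}(x)e^{-x^2}+p_{n,2}(x)e^{-2x^2}}.$$ Then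 $\lim_{n\to\infty}f_n(x)=\operatorname{erf}(x)$ for $x\ge0$, and the convergence is uniform on $[0,\infty)$.
   Context: $\operatorname{erf}(x)=\frac{2}{\sqrt{\pi}}\int_0^x e^{-\lambda^2}\,d\lambda$. For integers $0\le k\le n$, $c_{n,k}=\frac{n!}{(n-k)!\,(k+1)!}\cdot\frac{(2n+1-k)!}{2\,(2n+1)!}$. The polynomials $p(k,x)$ are defined recursively by $p(0,x)=1$ and $p(k,x)=\frac{d}{dx}p(k-1,x)-2x\,p(k-1,x)$ for $k\ge1$. *)

theory Defs
  imports "HOL-Analysis.Analysis" "HOL-Computational_Algebra.Polynomial"
begin

definition erf :: "real \<Rightarrow> real" where
  "erf x = 2 / sqrt pi * integral {0..x} (\<lambda>t. exp (- (t\<^sup>2)))"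

definition cc :: "nat \<Rightarrow> nat \<Rightarrow> real" where
  "cc n k = fact n / (fact (n - k) * fact (k + 1)) * (fact (2*n + 1 - k) / (2 * fact (2*n + 1)))"

fun pp :: "nat \<Rightarrow> real poly" where
  "pp 0 = 1"
| "pp (Suc k) = pderiv (pp k) - [:0, 2:] * pp k"

definition aa :: "nat \<Rightarrow> nat \<Rightarrow> real" where
  "aa k j = coeff (pp k) j"

definition mm :: "nat \<Rightarrow> nat" where
  "mm n = (if odd n then n - 1 else n)"

text \<open>alpha_aux n d = alpha_{m - 2d}, for d = 0 .. m/2\<close>
fun alpha_aux :: "nat \<Rightarrow> nat \<Rightarrow> real" where
  "alpha_aux n 0 = - 4 / pi * cc n (mm n) * aa (mm n) 0"
| "alpha_aux n (Suc d) =
     (if Suc d = mm n div 2 then alpha_aux n d - 4 / pi * cc n 0 * aa 0 0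
      else real (mm n - 2 * Suc d + 2) * alpha_aux n d / 2
           - 4 / pi * cc n (mm n - 2 * Suc d) * aa (mm n - 2 * Suc d) 0)"

text \<open>beta_aux n i = beta_{2n - 2i}, for i = 0 .. n\<close>
fun beta_aux :: "nat \<Rightarrow> nat \<Rightarrow> real" where
  "beta_aux n 0 = - 2 / pi * (-1) ^ n * cc n n * aa n n"
| "beta_aux n (Suc i) =
     (if Suc i = n then beta_aux n i / 2 - 2 / pi * cc n 0 * aa 0 0
      else real (n - Suc i + 1) * beta_aux n i / 2
           - 2 / pi * (\<Sum>k = n - Suc i .. min (2*n - 2 * Suc i) n.
                         (-1) ^ k * cc n k * aa k (2 * (n - Suc i) - k)))"

definition alpha :: "nat \<Rightarrow> nat \<Rightarrow> real" where
  "alpha n j = alpha_aux n ((mm n - j) div 2)"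

definition beta :: "nat \<Rightarrow> nat \<Rightarrow> real" where
  "beta n j = beta_aux n ((2*n - j) div 2)"

definition pn1 :: "nat \<Rightarrow> real \<Rightarrow> real" where
  "pn1 n x = (\<Sum>i = 0 .. mm n div 2. alpha n (2*i) * x ^ (2*i))"

definition pn2 :: "nat \<Rightarrow> real \<Rightarrow> real" where
  "pn2 n x = (\<Sum>i = 0 .. n. beta n (2*i) * x ^ (2*i))"

definition pn0 :: "nat \<Rightarrow> real" where
  "pn0 n = - (alpha n 0 + beta n 0)"

definition f_n :: "nat \<Rightarrow> real \<Rightarrow> real" where
  "f_n n x = sqrt (pn0 n + pn1 n x * exp (- (x\<^sup>2)) + pn2 n x * exp (- 2 * x\<^sup>2))"

end

(*
  Let G(s) be the integral of exp (-t^2) over [0, s], so that erf^2 = 4 G^2 / pi, and let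
  R_n = p_{n,0} + p_{n,1}(x) exp (-x^2) + p_{n,2}(x) exp (-2 x^2) be the radicand of f_n.
  The recurrences defining alpha and beta are exactly what makes R_n(0) = 0 and
  R_n'(s) = 8/pi exp (-s^2) Q_n(s), where
    Q_n(s) = sum_{k <= n} c_{n,k} s^(k+1) (a_{k,0} + (-1)^k p(k,s) exp (-s^2)).
  Integrating t^N (t - s)^N against p(2N,t) exp (-t^2), the 2N-th derivative of the
  Gaussian, by parts 2N times (N = n + 1) shows that (2N)! (G(s) - Q_n(s)) equals that
  integral. Cauchy's estimate on circles of radius sqrt N bounds the Gaussian derivative
  by (2N)! e^N / N^N, whence exp (-s^2) |G(s) - Q_n(s)| <= s exp (-s^2/4) 3^-N.
  Integrating in s gives |R_n - erf^2| <= 16/pi 3^-N on [0, oo), and taking square roots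
  |f_n - erf| <= sqrt (32/pi 3^-N) uniformly on [0, oo).
*)

theory Submission
  imports Defs "HOL-Complex_Analysis.Cauchy_Integral_Formula"
begin

lemma coeff_pderiv_minus_2x_mult:
  fixes p :: "'a::idom poly"
  shows "coeff (pderiv p - [:0, 2:] * p) j
         = of_nat (Suc j) * coeff p (Suc j) - (if j = 0 then 0 else 2 * coeff p (j - 1))"
  by (cases j) (simp_all add: coeff_pderiv)

lemma coeff_pp_eq_0: "k < j \<or> odd (k + j) \<Longrightarrow> coeff (pp k) j = 0"
proof (induction k arbitrary: j)
  case 0
  then show ?case by (cases j) auto
next
  case (Suc k)
  have "coeff (pp k) (Suc j) = 0" using Suc.prems by (intro Suc.IH) auto
  moreover have "j \<noteq> 0 \<Longrightarrow> coeff (pp k) (j - 1) = 0" using Suc.prems by (intro Suc.IH) auto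
  ultimately show ?case
    unfolding pp.simps coeff_pderiv_minus_2x_mult by simp
qed

lemma degree_pp: "degree (pp k) \<le> k"
  by (rule degree_le) (auto intro: coeff_pp_eq_0)

lemma map_poly_of_real_pp_Suc:
  "map_poly (of_real :: real \<Rightarrow> complex) (pp (Suc k))
   = pderiv (map_poly of_real (pp k)) - [:0, 2:] * map_poly of_real (pp k)"
  by (rule poly_eqI)
    (simp only: pp.simps coeff_map_poly [of complex_of_real, OF of_real_0] coeff_pderiv_minus_2x_mult, simp)

lemma poly_map_poly_of_real:
  "poly (map_poly of_real p) (of_real x) = (of_real (poly p x) :: 'a::{real_algebra_1,comm_ring_1})"
  by (induction p) (auto simp: map_poly_pCons)

definition gauss_deriv :: "nat \<Rightarrow> real \<Rightarrow> real" where
  "gauss_deriv k t = poly (pp k) t * exp (- (t\<^sup>2))"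

lemma gauss_deriv_has_real_derivative:
  "(gauss_deriv k has_real_derivative gauss_deriv (Suc k) t) (at t)"
  unfolding gauss_deriv_def [abs_def]
  by (auto intro!: derivative_eq_intros simp: algebra_simps)

lemma gauss_deriv_0 [simp]: "gauss_deriv 0 t = exp (- (t\<^sup>2))"
  by (simp add: gauss_deriv_def)

lemma gauss_deriv_at_0: "gauss_deriv k 0 = aa k 0"
  by (simp add: gauss_deriv_def aa_def poly_0_coeff_0)

lemma higher_deriv_complex_gauss:
  "(deriv ^^ k) (\<lambda>z::complex. exp (- (z\<^sup>2)))
   = (\<lambda>z. poly (map_poly of_real (pp k)) z * exp (- (z\<^sup>2)))"
proof (induction k)
  case 0
  then show ?case by simp
next
  case (Suc k)
  have "deriv (\<lambda>z. poly (map_poly of_real (pp k)) z * exp (- (z\<^sup>2))) z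
        = poly (map_poly of_real (pp (Suc k))) z * exp (- (z\<^sup>2))" for z :: complex
    unfolding map_poly_of_real_pp_Suc
    by (rule DERIV_imp_deriv) (auto intro!: derivative_eq_intros simp: algebra_simps)
  then show ?case using Suc.IH by auto
qed

text \<open>Cauchy's estimate on the circle of radius \<open>r\<close> about \<open>t\<close>, on which
  \<open>|exp (-z\<^sup>2)| = exp ((Im z)\<^sup>2 - (Re z)\<^sup>2) \<le> exp (r\<^sup>2)\<close>.\<close>
lemma abs_gauss_deriv_le:
  assumes "r > 0"
  shows "\<bar>gauss_deriv k t\<bar> \<le> fact k * exp (r\<^sup>2) / r ^ k"
proof -
  let ?f = "\<lambda>z::complex. exp (- (z\<^sup>2))"
  have "norm ((deriv ^^ k) ?f (of_real t)) \<le> fact k * exp (r\<^sup>2) / r ^ k"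
  proof (rule Cauchy_inequality)
    show "?f holomorphic_on ball (of_real t) r" by (intro holomorphic_intros)
    show "continuous_on (cball (of_real t) r) ?f" by (intro continuous_intros)
    fix z :: complex
    assume "norm (of_real t - z) = r"
    then have "\<bar>Im z\<bar> \<le> r" using abs_Im_le_cmod [of "of_real t - z"] by simp
    then have "(Im z)\<^sup>2 \<le> r\<^sup>2" using abs_le_square_iff [of "Im z" r] assms by simp
    moreover have "Re (- (z\<^sup>2)) = (Im z)\<^sup>2 - (Re z)\<^sup>2" by (simp add: power2_eq_square)
    ultimately have "Re (- (z\<^sup>2)) \<le> r\<^sup>2" using zero_le_power2 [of "Re z"] by linarith
    then show "norm (?f z) \<le> exp (r\<^sup>2)" by simp
  qed (use assms in auto)
  moreover have "(deriv ^^ k) ?f (of_real t) = of_real (gauss_deriv k t)"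
    by (simp add: higher_deriv_complex_gauss gauss_deriv_def poly_map_poly_of_real
        flip: exp_of_real)
  ultimately show ?thesis by simp
qed

lemma poly_eq_sum_atMost:
  fixes p :: "'a::comm_semiring_1 poly"
  assumes "degree p \<le> N"
  shows "poly p x = (\<Sum>j\<le>N. coeff p j * x ^ j)"
  unfolding poly_altdef
  by (rule sum.mono_neutral_left) (use assms in \<open>auto simp: coeff_eq_0\<close>)

lemma sum_atMost_even_indices:
  fixes f :: "nat \<Rightarrow> 'a::comm_monoid_add"
  assumes "\<And>k. odd k \<Longrightarrow> f k = 0"
  shows "(\<Sum>k\<le>n. f k) = (\<Sum>i\<le>n div 2. f (2 * i))"
proof (induction n)
  case 0
  then show ?case by simp
next
  case (Suc n)
  show ?case
  proof (cases "even n")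
    case True
    then have "Suc n div 2 = n div 2" by presburger
    then show ?thesis using Suc True assms by simp
  next
    case False
    then have "Suc n div 2 = Suc (n div 2)" "2 * Suc (n div 2) = Suc n" by presburger+
    then show ?thesis using Suc by simp
  qed
qed

text \<open>The left-hand side is \<open>exp (c s\<^sup>2/2)\<close> times the derivative of
  \<open>exp (-c s\<^sup>2/2) \<Sum>\<^sub>i a\<^sub>i s\<^bsup>2i\<^esup>\<close>.\<close>
lemma sum_even_powers_regroup:
  fixes a b :: "nat \<Rightarrow> real"
  assumes step: "\<And>i. i < M \<Longrightarrow> (2 * real i + 2) * a (Suc i) - c * a i = b i"
    and top: "- c * a M = b M"
  shows "(\<Sum>i\<le>M. a i * (real (2 * i) * s ^ (2 * i - 1) - c * s ^ (2 * i + 1)))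
         = (\<Sum>i\<le>M. b i * s ^ (2 * i + 1))"
proof -
  have regroup: "(\<Sum>i\<le>m. a i * (real (2 * i) * s ^ (2 * i - 1) - c * s ^ (2 * i + 1)))
      = (\<Sum>i<m. ((2 * real i + 2) * a (Suc i) - c * a i) * s ^ (2 * i + 1))
        - c * a m * s ^ (2 * m + 1)" for m
  proof (induction m)
    case (Suc m)
    have "2 * Suc m - 1 = 2 * m + 1" by simp
    with Suc show ?case by (simp add: algebra_simps)
  qed simp
  have "(\<Sum>i<M. ((2 * real i + 2) * a (Suc i) - c * a i) * s ^ (2 * i + 1))
      = (\<Sum>i<M. b i * s ^ (2 * i + 1))"
    using step by (intro sum.cong) auto
  then show ?thesis
    unfolding regroup by (simp add: lessThan_Suc_atMost [symmetric] flip: top)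
qed

lemma mm_eq: "mm n = 2 * (n div 2)"
  by (simp add: mm_def)

lemma alpha_even: "i \<le> n div 2 \<Longrightarrow> alpha n (2 * i) = alpha_aux n (n div 2 - i)"
  by (simp add: alpha_def mm_eq flip: diff_mult_distrib2)

lemma alpha_recurrence:
  assumes "i < n div 2"
  shows "(2 * real i + 2) * alpha n (2 * Suc i) - 2 * alpha n (2 * i)
         = 8 / pi * cc n (2 * i) * aa (2 * i) 0"
proof -
  define d where "d = n div 2 - Suc i"
  have hi: "alpha n (2 * Suc i) = alpha_aux n d" and lo: "alpha n (2 * i) = alpha_aux n (Suc d)"
    using assms alpha_even [of "Suc i" n] alpha_even [of i n] by (simp_all add: d_def Suc_diff_Suc)
  have idx: "mm n - 2 * Suc d = 2 * i" using assms by (simp add: d_def mm_eq)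
  show ?thesis
  proof (cases "Suc d = mm n div 2")
    case True
    have "alpha_aux n (Suc d) = alpha_aux n d - 4 / pi * cc n 0 * aa 0 0"
      by (subst alpha_aux.simps(2)) (simp add: True)
    moreover have "i = 0" using True assms by (simp add: d_def mm_eq)
    ultimately show ?thesis using hi lo by (simp add: aa_def)
  next
    case False
    with hi lo idx show ?thesis by (simp add: field_simps)
  qed
qed

lemma alpha_top: "- 2 * alpha n (2 * (n div 2)) = 8 / pi * cc n (2 * (n div 2)) * aa (2 * (n div 2)) 0"
  by (simp add: alpha_even mm_eq)

lemma alpha_sum_identity:
  "(\<Sum>i\<le>n div 2. alpha n (2 * i) * (real (2 * i) * s ^ (2 * i - 1) - 2 * s ^ (2 * i + 1)))
   = 8 / pi * (\<Sum>k\<le>n. cc n k * aa k 0 * s ^ (k + 1))"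
proof -
  have "(\<Sum>i\<le>n div 2. alpha n (2 * i) * (real (2 * i) * s ^ (2 * i - 1) - 2 * s ^ (2 * i + 1)))
      = (\<Sum>i\<le>n div 2. 8 / pi * cc n (2 * i) * aa (2 * i) 0 * s ^ (2 * i + 1))"
    by (rule sum_even_powers_regroup) (use alpha_recurrence alpha_top in auto)
  also have "\<dots> = (\<Sum>k\<le>n. 8 / pi * cc n k * aa k 0 * s ^ (k + 1))"
    by (rule sum_atMost_even_indices [symmetric]) (simp add: aa_def coeff_pp_eq_0)
  finally show ?thesis by (simp add: sum_distrib_left mult.assoc)
qed

definition beta_source :: "nat \<Rightarrow> nat \<Rightarrow> real" where
  "beta_source n i = (\<Sum>k = i..min (2 * i) n. (-1) ^ k * cc n k * aa k (2 * i - k))"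

lemma beta_even: "i \<le> n \<Longrightarrow> beta n (2 * i) = beta_aux n (n - i)"
  by (simp add: beta_def flip: diff_mult_distrib2)

lemma beta_recurrence:
  assumes "i < n"
  shows "(2 * real i + 2) * beta n (2 * Suc i) - 4 * beta n (2 * i) = 8 / pi * beta_source n i"
proof -
  define d where "d = n - Suc i"
  have hi: "beta n (2 * Suc i) = beta_aux n d" and lo: "beta n (2 * i) = beta_aux n (Suc d)"
    using assms beta_even [of "Suc i" n] beta_even [of i n] by (simp_all add: d_def Suc_diff_Suc)
  have idx: "n - Suc d = i" "2 * n - 2 * Suc d = 2 * i" "2 * (n - Suc d) = 2 * i"
    using assms by (auto simp: d_def)
  show ?thesis
  proof (cases "Suc d = n")
    case True
    have "beta_aux n (Suc d) = beta_aux n d / 2 - 2 / pi * cc n 0 * aa 0 0"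
      by (subst beta_aux.simps(2)) (simp add: True)
    moreover have "i = 0" using True assms by (simp add: d_def)
    ultimately show ?thesis using hi lo by (simp add: aa_def beta_source_def)
  next
    case False
    with hi lo idx show ?thesis by (simp add: beta_source_def field_simps)
  qed
qed

lemma beta_top: "- 4 * beta n (2 * n) = 8 / pi * beta_source n n"
  by (simp add: beta_even beta_source_def)

lemma beta_sum_identity:
  "(\<Sum>i\<le>n. beta n (2 * i) * (real (2 * i) * s ^ (2 * i - 1) - 4 * s ^ (2 * i + 1)))
   = 8 / pi * (\<Sum>i\<le>n. beta_source n i * s ^ (2 * i + 1))"
proof -
  have "(\<Sum>i\<le>n. beta n (2 * i) * (real (2 * i) * s ^ (2 * i - 1) - 4 * s ^ (2 * i + 1)))
      = (\<Sum>i\<le>n. 8 / pi * beta_source n i * s ^ (2 * i + 1))"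
    by (rule sum_even_powers_regroup) (use beta_recurrence beta_top in auto)
  then show ?thesis by (simp add: sum_distrib_left mult.assoc)
qed

lemma sum_beta_source_powers:
  "(\<Sum>i\<le>n. beta_source n i * s ^ (2 * i + 1))
   = (\<Sum>k\<le>n. (-1) ^ k * cc n k * s ^ (k + 1) * poly (pp k) s)"
proof -
  define I where "I k = {i \<in> {..n}. i \<le> k \<and> k \<le> 2 * i}" for k
  have "(\<Sum>i\<le>n. beta_source n i * s ^ (2 * i + 1))
      = (\<Sum>i\<le>n. \<Sum>k \<in> {k \<in> {..n}. i \<le> k \<and> k \<le> 2 * i}.
           (-1) ^ k * cc n k * aa k (2 * i - k) * s ^ (2 * i + 1))"
  proof (rule sum.cong [OF refl])
    fix i
    have "{i..min (2 * i) n} = {k \<in> {..n}. i \<le> k \<and> k \<le> 2 * i}" by auto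
    then show "beta_source n i * s ^ (2 * i + 1) = (\<Sum>k \<in> {k \<in> {..n}. i \<le> k \<and> k \<le> 2 * i}.
           (-1) ^ k * cc n k * aa k (2 * i - k) * s ^ (2 * i + 1))"
      by (simp add: beta_source_def sum_distrib_right)
  qed
  also have "\<dots> = (\<Sum>k\<le>n. \<Sum>i\<in>I k. (-1) ^ k * cc n k * aa k (2 * i - k) * s ^ (2 * i + 1))"
    unfolding I_def by (rule sum.swap_restrict) auto
  also have "\<dots> = (\<Sum>k\<le>n. (-1) ^ k * cc n k * s ^ (k + 1) * poly (pp k) s)"
  proof (rule sum.cong [OF refl])
    fix k
    assume "k \<in> {..n}"
    have "s ^ (k + 1) * poly (pp k) s = (\<Sum>j\<le>k. aa k j * s ^ (k + 1 + j))"
      by (simp add: poly_eq_sum_atMost [OF degree_pp] sum_distrib_left aa_def power_add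
          algebra_simps)
    also have "\<dots> = (\<Sum>j | j \<le> k \<and> even (k + j). aa k j * s ^ (k + 1 + j))"
      by (rule sum.mono_neutral_right) (auto simp: aa_def coeff_pp_eq_0)
    also have "\<dots> = (\<Sum>i\<in>I k. aa k (2 * i - k) * s ^ (2 * i + 1))"
      by (rule sum.reindex_bij_witness [where i = "\<lambda>i. 2 * i - k" and j = "\<lambda>j. (k + j) div 2"])
        (use \<open>k \<in> {..n}\<close> in \<open>auto simp: I_def\<close>)
    finally show "(\<Sum>i\<in>I k. (-1) ^ k * cc n k * aa k (2 * i - k) * s ^ (2 * i + 1))
        = (-1) ^ k * cc n k * s ^ (k + 1) * poly (pp k) s"
      by (simp add: sum_distrib_left mult.assoc)
  qed
  finally show ?thesis .
qed

definition radicand :: "nat \<Rightarrow> real \<Rightarrow> real" where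
  "radicand n x = pn0 n + pn1 n x * exp (- (x\<^sup>2)) + pn2 n x * exp (- 2 * x\<^sup>2)"

definition gauss_integral_approx :: "nat \<Rightarrow> real \<Rightarrow> real" where
  "gauss_integral_approx n s =
     (\<Sum>k\<le>n. cc n k * s ^ (k + 1) * (aa k 0 + (-1) ^ k * poly (pp k) s * exp (- (s\<^sup>2))))"

lemma radicand_at_0: "radicand n 0 = 0"
proof -
  have "pn1 n 0 = alpha n 0" "pn2 n 0 = beta n 0"
    unfolding pn1_def pn2_def by (subst sum.atLeast_Suc_atMost; simp add: power_0_left)+
  then show ?thesis by (simp add: radicand_def pn0_def)
qed

lemma radicand_has_real_derivative:
  "(radicand n has_real_derivative 8 / pi * exp (- (s\<^sup>2)) * gauss_integral_approx n s) (at s)"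
proof -
  define e where "e = exp (- (s\<^sup>2))"
  define e2 where "e2 = exp (- 2 * s\<^sup>2)"
  define A where "A = (\<Sum>i\<le>n div 2. alpha n (2 * i) * (real (2 * i) * s ^ (2 * i - 1)))"
  define B where "B = (\<Sum>i\<le>n. beta n (2 * i) * (real (2 * i) * s ^ (2 * i - 1)))"
  have pn1: "pn1 n = (\<lambda>x. \<Sum>i\<le>n div 2. alpha n (2 * i) * x ^ (2 * i))"
    by (simp add: pn1_def [abs_def] mm_eq atLeast0AtMost)
  have pn2: "pn2 n = (\<lambda>x. \<Sum>i\<le>n. beta n (2 * i) * x ^ (2 * i))"
    by (simp add: pn2_def [abs_def] atLeast0AtMost)
  have alpha_part: "A - 2 * s * pn1 n s
      = (\<Sum>i\<le>n div 2. alpha n (2 * i) * (real (2 * i) * s ^ (2 * i - 1) - 2 * s ^ (2 * i + 1)))"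
    unfolding A_def pn1 by (simp add: sum_distrib_left sum_subtractf algebra_simps)
  have beta_part: "B - 4 * s * pn2 n s
      = (\<Sum>i\<le>n. beta n (2 * i) * (real (2 * i) * s ^ (2 * i - 1) - 4 * s ^ (2 * i + 1)))"
    unfolding B_def pn2 by (simp add: sum_distrib_left sum_subtractf algebra_simps)
  have "(radicand n has_real_derivative
      A * e + pn1 n s * (e * (- 2 * s)) + (B * e2 + pn2 n s * (e2 * (- 4 * s)))) (at s)"
    unfolding radicand_def [abs_def] A_def B_def e_def e2_def pn1 pn2
    by (auto intro!: derivative_eq_intros simp: ac_simps)
  also have "A * e + pn1 n s * (e * (- 2 * s)) + (B * e2 + pn2 n s * (e2 * (- 4 * s)))
      = e * (A - 2 * s * pn1 n s) + e * e * (B - 4 * s * pn2 n s)"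
    by (simp add: e_def e2_def algebra_simps flip: exp_add)
  also have "\<dots> = 8 / pi * e * gauss_integral_approx n s"
    unfolding alpha_part beta_part alpha_sum_identity beta_sum_identity sum_beta_source_powers
      gauss_integral_approx_def sum_distrib_left e_def
    by (simp add: sum.distrib [symmetric] algebra_simps)
  finally show ?thesis
    unfolding e_def .
qed

lemma fact_mult_cc:
  assumes "k \<le> n"
  shows "fact (2 * Suc n) * cc n k = fact (2 * n + 1 - k) * real (Suc n choose (n - k))"
proof -
  have "Suc n - (n - k) = k + 1" using assms by simp
  then have binom: "real (Suc n choose (n - k)) = fact (Suc n) / (fact (n - k) * fact (k + 1))"
    using assms by (simp add: binomial_fact)
  have "fact (2 * Suc n) = (2 * real n + 2) * fact (2 * n + 1)"
    by (simp add: fact_Suc algebra_simps)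
  moreover have "fact (Suc n) = (real n + 1) * fact n"
    by (simp add: algebra_simps)
  ultimately show ?thesis
    unfolding cc_def binom by (simp add: field_simps del: fact_Suc)
qed

lemma coeff_monom_mult_linear_power:
  fixes a :: "'a::comm_semiring_1"
  shows "coeff (monom 1 N * [:a, 1:] ^ N) j
         = (if j < N then 0 else of_nat (N choose (j - N)) * a ^ (2 * N - j))"
proof (cases "j - N \<le> N")
  case True
  then show ?thesis by (auto simp: coeff_monom_mult coeff_linear_poly_power mult_2)
next
  case False
  then show ?thesis by (auto simp: coeff_monom_mult coeff_eq_0 degree_linear_power binomial_eq_0)
qed

lemma poly_higher_pderiv_0: "poly ((pderiv ^^ j) p) 0 = fact j * coeff p j"
  for p :: "'a::{idom,semiring_char_0} poly"
  by (simp add: poly_0_coeff_0 coeff_higher_pderiv pochhammer_fact)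

lemma higher_pderiv_pcompose_shift:
  "(pderiv ^^ j) (pcompose p [:s, 1:]) = pcompose ((pderiv ^^ j) p) [:s, 1 :: 'a::idom:]"
  by (induction j) (simp_all add: pderiv_pcompose pderiv_pCons)

lemma poly_higher_pderiv_eq_coeff_pcompose:
  fixes p :: "'a::{idom,semiring_char_0} poly"
  shows "poly ((pderiv ^^ j) p) s = fact j * coeff (pcompose p [:s, 1:]) j"
  using poly_higher_pderiv_0 [of j "pcompose p [:s, 1:]"]
  by (simp add: higher_pderiv_pcompose_shift poly_pcompose)

lemma integration_by_parts_sum_has_real_derivative:
  fixes P :: "real poly" and g :: "nat \<Rightarrow> real \<Rightarrow> real"
  assumes g: "\<And>j t. (g j has_real_derivative g (Suc j) t) (at t)"
  shows "((\<lambda>t. \<Sum>j<K. (-1) ^ j * poly ((pderiv ^^ j) P) t * g (K - 1 - j) t)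
          has_real_derivative poly P t * g K t - (-1) ^ K * poly ((pderiv ^^ K) P) t * g 0 t) (at t)"
proof -
  define u where "u j = (-1) ^ j * poly ((pderiv ^^ j) P) t * g (K - j) t" for j
  have "((\<lambda>t. \<Sum>j<K. (-1) ^ j * poly ((pderiv ^^ j) P) t * g (K - 1 - j) t)
      has_real_derivative (\<Sum>j<K. (-1) ^ j * poly (pderiv ((pderiv ^^ j) P)) t * g (K - 1 - j) t
        + g (Suc (K - 1 - j)) t * ((-1) ^ j * poly ((pderiv ^^ j) P) t))) (at t)"
    by (intro DERIV_sum DERIV_mult DERIV_cmult poly_DERIV g)
  also have "(\<Sum>j<K. (-1) ^ j * poly (pderiv ((pderiv ^^ j) P)) t * g (K - 1 - j) t
        + g (Suc (K - 1 - j)) t * ((-1) ^ j * poly ((pderiv ^^ j) P) t))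
      = (\<Sum>j<K. u j - u (Suc j))"
  proof (rule sum.cong [OF refl])
    fix j
    assume "j \<in> {..<K}"
    then have "Suc (K - 1 - j) = K - j" "K - 1 - j = K - Suc j" by auto
    then show "(-1) ^ j * poly (pderiv ((pderiv ^^ j) P)) t * g (K - 1 - j) t
        + g (Suc (K - 1 - j)) t * ((-1) ^ j * poly ((pderiv ^^ j) P) t) = u j - u (Suc j)"
      by (simp add: u_def algebra_simps)
  qed
  also have "\<dots> = u 0 - u K"
    by (rule sum_lessThan_telescope')
  finally show ?thesis
    by (simp add: u_def)
qed

definition bump_poly :: "real \<Rightarrow> nat \<Rightarrow> real poly" where
  "bump_poly s N = monom 1 N * [:- s, 1:] ^ N"

lemma poly_bump_poly: "poly (bump_poly s N) t = t ^ N * (t - s) ^ N"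
  by (simp add: bump_poly_def poly_monom)

lemma abs_poly_bump_poly_le:
  assumes "0 \<le> t" "t \<le> s"
  shows "\<bar>poly (bump_poly s N) t\<bar> \<le> (s\<^sup>2 / 4) ^ N"
proof -
  have "\<bar>poly (bump_poly s N) t\<bar> = (t * (s - t)) ^ N"
    using assms by (simp add: poly_bump_poly abs_mult power_abs power_mult_distrib)
  also have "\<dots> \<le> (s\<^sup>2 / 4) ^ N"
  proof (rule power_mono)
    show "t * (s - t) \<le> s\<^sup>2 / 4"
      using sum_squares_ge_zero [of "s - 2 * t" 0] by (simp add: power2_eq_square algebra_simps)
  qed (use assms in simp)
  finally show ?thesis .
qed

lemma pcompose_power_left: "pcompose (p ^ k) q = pcompose p q ^ k"
  for p q :: "'a::comm_semiring_1 poly"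
  by (induction k) (simp_all add: pcompose_1 pcompose_mult)

lemma pcompose_bump_poly: "pcompose (bump_poly s N) [:s, 1:] = monom 1 N * [:s, 1:] ^ N"
  by (simp add: bump_poly_def monom_altdef pcompose_mult pcompose_power_left pcompose_pCons
      mult.commute)

lemma poly_higher_pderiv_bump_poly_top: "poly ((pderiv ^^ (2 * N)) (bump_poly s N)) t = fact (2 * N)"
proof -
  let ?d = "(pderiv ^^ (2 * N)) (bump_poly s N)"
  have "degree (bump_poly s N) = 2 * N"
    unfolding bump_poly_def
    by (subst degree_mult_eq) (auto simp: degree_monom_eq degree_linear_power)
  then have "degree ?d = 0"
    by (simp add: degree_higher_pderiv)
  then obtain c where "?d = [:c:]"
    by (metis degree_0_id)
  then have "poly ?d t = poly ?d 0"
    by simp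
  also have "\<dots> = fact (2 * N)"
    by (simp add: poly_higher_pderiv_0 bump_poly_def coeff_monom_mult_linear_power)
  finally show ?thesis .
qed

definition parts_sum :: "nat \<Rightarrow> real \<Rightarrow> real \<Rightarrow> real" where
  "parts_sum n s t = (\<Sum>j<2 * Suc n. (-1) ^ j * poly ((pderiv ^^ j) (bump_poly s (Suc n))) t
                                      * gauss_deriv (2 * Suc n - 1 - j) t)"

lemma parts_sum_has_real_derivative:
  "(parts_sum n s has_real_derivative
     poly (bump_poly s (Suc n)) t * gauss_deriv (2 * Suc n) t - fact (2 * Suc n) * exp (- (t\<^sup>2))) (at t)"
  using integration_by_parts_sum_has_real_derivative [where g = gauss_deriv and K = "2 * Suc n"
      and P = "bump_poly s (Suc n)", OF gauss_deriv_has_real_derivative]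
  unfolding parts_sum_def [abs_def] poly_higher_pderiv_bump_poly_top gauss_deriv_0
    power_minus1_even mult_1 .

text \<open>At \<open>t = 0\<close> and \<open>t = s\<close> only the Taylor coefficients of \<open>t\<^sup>N (t - s)\<^sup>N\<close>
  about these points of order \<open>\<ge> N\<close> survive; their binomial coefficients produce \<open>c\<^sub>n\<^sub>,\<^sub>k\<close>.\<close>
lemma parts_sum_endpoints:
  "parts_sum n s 0 - parts_sum n s s = fact (2 * Suc n) * gauss_integral_approx n s"
proof -
  define N where "N = Suc n"
  define F where "F j = (-1) ^ j * fact j * (coeff (bump_poly s N) j * aa (2 * N - 1 - j) 0
      - coeff (monom 1 N * [:s, 1:] ^ N) j * gauss_deriv (2 * N - 1 - j) s)" for j
  have "parts_sum n s 0 - parts_sum n s s = (\<Sum>j<2 * N. F j)"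
    unfolding parts_sum_def N_def [symmetric] F_def sum_subtractf [symmetric]
    by (intro sum.cong refl) (simp add: poly_higher_pderiv_0 poly_higher_pderiv_eq_coeff_pcompose
        pcompose_bump_poly gauss_deriv_at_0 algebra_simps)
  also have "\<dots> = (\<Sum>j\<in>{N..<2 * N}. F j)"
    by (rule sum.mono_neutral_right) (auto simp: F_def bump_poly_def coeff_monom_mult_linear_power)
  also have "\<dots> = (\<Sum>k\<le>n. F (2 * n + 1 - k))"
    by (rule sum.reindex_bij_witness [where i = "\<lambda>k. 2 * n + 1 - k" and j = "\<lambda>j. 2 * n + 1 - j"])
      (auto simp: N_def)
  also have "\<dots> = (\<Sum>k\<le>n. fact (2 * N) * (cc n k * s ^ (k + 1)
                     * (aa k 0 + (-1) ^ k * poly (pp k) s * exp (- (s\<^sup>2)))))"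
  proof (rule sum.cong [OF refl])
    fix k
    assume "k \<in> {..n}"
    then have k: "k \<le> n" by simp
    define j where "j = 2 * n + 1 - k"
    have idx: "\<not> j < N" "j - N = n - k" "2 * N - j = k + 1" "2 * N - 1 - j = k"
      using k by (auto simp: j_def N_def)
    have "even j \<longleftrightarrow> odd k"
      using k by (simp add: j_def)
    then have sign: "(-1::real) ^ j = - ((-1) ^ k)"
      by (simp add: minus_one_power_iff)
    have square: "(-1::real) ^ k * (-1) ^ k = 1"
      by (simp flip: power_add)
    have cf: "fact j * real (N choose (n - k)) = fact (2 * N) * cc n k"
      using fact_mult_cc [OF k] by (simp add: j_def N_def)
    have "F j = (fact j * real (N choose (n - k)))
        * (s ^ (k + 1) * (aa k 0 + (-1) ^ k * gauss_deriv k s))"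
      unfolding F_def bump_poly_def coeff_monom_mult_linear_power idx sign
      by (simp add: idx power_minus [of s] algebra_simps square)
    also have "\<dots> = fact (2 * N) * (cc n k * s ^ (k + 1)
                     * (aa k 0 + (-1) ^ k * poly (pp k) s * exp (- (s\<^sup>2))))"
      unfolding cf gauss_deriv_def by (simp only: mult_ac)
    finally show "F (2 * n + 1 - k) = \<dots>"
      unfolding j_def .
  qed
  finally show ?thesis
    by (simp add: gauss_integral_approx_def sum_distrib_left N_def)
qed

lemma real_differentiable_bound_general:
  fixes f \<phi> :: "real \<Rightarrow> real"
  assumes "a \<le> b"
    and "continuous_on {a..b} f" "continuous_on {a..b} \<phi>"
    and "\<And>x. a < x \<Longrightarrow> x < b \<Longrightarrow> (f has_real_derivative f' x) (at x)"
    and "\<And>x. a < x \<Longrightarrow> x < b \<Longrightarrow> (\<phi> has_real_derivative \<phi>' x) (at x)"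
    and "\<And>x. a < x \<Longrightarrow> x < b \<Longrightarrow> \<bar>f' x\<bar> \<le> \<phi>' x"
  shows "\<bar>f b - f a\<bar> \<le> \<phi> b - \<phi> a"
proof (cases "a = b")
  case False
  with assms show ?thesis
    using differentiable_bound_general [of a b f \<phi> f' \<phi>']
    by (simp add: has_real_derivative_iff_has_vector_derivative)
qed simp

definition gauss_integral :: "real \<Rightarrow> real" where
  "gauss_integral x = integral {0..x} (\<lambda>t. exp (- (t\<^sup>2)))"

lemma erf_eq_gauss_integral: "erf x = 2 / sqrt pi * gauss_integral x"
  by (simp add: erf_def gauss_integral_def)

lemma gauss_integral_0 [simp]: "gauss_integral 0 = 0"
  by (simp add: gauss_integral_def)

lemma gauss_integral_nonneg: "gauss_integral x \<ge> 0"
  unfolding gauss_integral_def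
  by (intro integral_nonneg integrable_continuous_interval continuous_intros) simp

lemma continuous_on_gauss_integral: "continuous_on {0..x} gauss_integral"
  unfolding gauss_integral_def [abs_def]
  by (intro indefinite_integral_continuous_1 integrable_continuous_interval continuous_intros)

lemma gauss_integral_has_real_derivative:
  assumes "t > 0"
  shows "(gauss_integral has_real_derivative exp (- (t\<^sup>2))) (at t)"
proof -
  have "(gauss_integral has_real_derivative exp (- (t\<^sup>2))) (at t within {0..t + 1})"
    unfolding gauss_integral_def [abs_def] using assms
    by (intro integral_has_real_derivative continuous_intros) auto
  then show ?thesis
    using assms by (simp add: at_within_Icc_at)
qed

lemma abs_gauss_integral_minus_approx_le:
  assumes s: "s \<ge> 0"
  shows "\<bar>gauss_integral s - gauss_integral_approx n s\<bar>
         \<le> s * (s\<^sup>2 / 4) ^ Suc n * exp (Suc n) / real (Suc n) ^ Suc n"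
proof -
  define N where "N = Suc n"
  define C where "C = (s\<^sup>2 / 4) ^ N * exp N / real N ^ N"
  define B where "B = fact (2 * N) * C"
  define \<Phi> where "\<Phi> t = parts_sum n s t + fact (2 * N) * gauss_integral t" for t
  have "sqrt (real N) ^ (2 * N) = real N ^ N"
    by (simp add: power_mult)
  then have gauss_deriv_bound: "\<bar>gauss_deriv (2 * N) t\<bar> \<le> fact (2 * N) * exp N / real N ^ N" for t
    using abs_gauss_deriv_le [of "sqrt N" "2 * N" t] by (simp add: N_def)
  have "\<bar>\<Phi> s - \<Phi> 0\<bar> \<le> B * s - B * 0"
  proof (rule real_differentiable_bound_general [OF s])
    show "continuous_on {0..s} \<Phi>"
      unfolding \<Phi>_def
      using parts_sum_has_real_derivative DERIV_isCont
      by (intro continuous_intros continuous_on_gauss_integral continuous_at_imp_continuous_on) blast+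
    show "continuous_on {0..s} (\<lambda>t. B * t)"
      by (intro continuous_intros)
    fix t
    assume t: "0 < t" "t < s"
    show "(\<Phi> has_real_derivative poly (bump_poly s N) t * gauss_deriv (2 * N) t) (at t)"
      unfolding \<Phi>_def [abs_def] N_def
      using parts_sum_has_real_derivative gauss_integral_has_real_derivative t
      by (auto intro!: derivative_eq_intros)
    show "((\<lambda>t. B * t) has_real_derivative B) (at t)"
      by (auto intro!: derivative_eq_intros)
    show "\<bar>poly (bump_poly s N) t * gauss_deriv (2 * N) t\<bar> \<le> B"
      using mult_mono [OF abs_poly_bump_poly_le [of t s N] gauss_deriv_bound [of t]] t
      by (simp add: B_def C_def abs_mult field_simps)
  qed
  moreover have "\<Phi> s - \<Phi> 0 = fact (2 * N) * (gauss_integral s - gauss_integral_approx n s)"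
    using parts_sum_endpoints [of n s] by (simp add: \<Phi>_def N_def algebra_simps)
  ultimately have "fact (2 * N) * \<bar>gauss_integral s - gauss_integral_approx n s\<bar>
      \<le> fact (2 * N) * (s * C)"
    by (simp add: B_def abs_mult mult.commute)
  then have "\<bar>gauss_integral s - gauss_integral_approx n s\<bar> \<le> s * C"
    by (simp add: mult_le_cancel_left_pos)
  then show ?thesis
    by (simp add: C_def N_def mult.assoc)
qed

text \<open>With \<open>v = 3 s\<^sup>2 / (4 m)\<close> the \<open>m\<close>-th root of the left-hand side, divided by
  \<open>s exp (-s\<^sup>2/4)\<close>, is \<open>v e\<^bsup>1 - v\<^esup> / 3 \<le> 1 / 3\<close>.\<close>
lemma gauss_weight_le:
  assumes "m > 0" "s \<ge> 0"
  shows "exp (- (s\<^sup>2)) * (s * (s\<^sup>2 / 4) ^ m * exp m / real m ^ m)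
         \<le> s * exp (- (s\<^sup>2) / 4) * (1 / 3) ^ m"
proof -
  define v where "v = 3 * s\<^sup>2 / (4 * m)"
  have "v * exp (1 - v) \<le> exp (v - 1) * exp (1 - v)"
    using exp_ge_add_one_self [of "v - 1"] by (intro mult_right_mono) auto
  then have "s\<^sup>2 / 4 / m * exp (1 - v) \<le> 1 / 3"
    using assms by (simp add: v_def field_simps flip: exp_add)
  then have "(s\<^sup>2 / 4 / m * exp (1 - v)) ^ m \<le> (1 / 3) ^ m"
    by (intro power_mono) auto
  moreover have "(s\<^sup>2 / 4 / m * exp (1 - v)) ^ m = (s\<^sup>2 / 4) ^ m / real m ^ m * exp (m - 3 * s\<^sup>2 / 4)"
    using assms by (simp add: v_def power_mult_distrib power_divide field_simps flip: exp_of_nat_mult)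
  ultimately have "(s\<^sup>2 / 4) ^ m / real m ^ m * exp (m - 3 * s\<^sup>2 / 4) \<le> (1 / 3) ^ m"
    by simp
  then have bound: "s * exp (- (s\<^sup>2) / 4) * ((s\<^sup>2 / 4) ^ m / real m ^ m * exp (m - 3 * s\<^sup>2 / 4))
      \<le> s * exp (- (s\<^sup>2) / 4) * (1 / 3) ^ m"
    using assms by (intro mult_left_mono) auto
  have "exp (- (s\<^sup>2)) * exp m = exp (- (s\<^sup>2) / 4) * exp (m - 3 * s\<^sup>2 / 4)"
    by (simp flip: exp_add)
  then have regroup: "exp (- (s\<^sup>2)) * (s * (s\<^sup>2 / 4) ^ m * exp m / real m ^ m)
      = s * exp (- (s\<^sup>2) / 4) * ((s\<^sup>2 / 4) ^ m / real m ^ m * exp (m - 3 * s\<^sup>2 / 4))"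
    by (simp add: field_simps)
  show ?thesis
    unfolding regroup by (rule bound)
qed

lemma abs_radicand_minus_erf_sq_le:
  assumes x: "x \<ge> 0"
  shows "\<bar>radicand n x - (erf x)\<^sup>2\<bar> \<le> 16 / pi * (1 / 3) ^ Suc n"
proof -
  define c where "c = (1 / 3 :: real) ^ Suc n"
  define D where "D t = radicand n t - 4 / pi * (gauss_integral t)\<^sup>2" for t
  define \<phi> where "\<phi> t = - 16 / pi * c * exp (- (t\<^sup>2) / 4)" for t
  have "\<bar>D x - D 0\<bar> \<le> \<phi> x - \<phi> 0"
  proof (rule real_differentiable_bound_general [OF x])
    show "continuous_on {0..x} D"
      unfolding D_def
      using radicand_has_real_derivative DERIV_isCont
      by (intro continuous_intros continuous_on_gauss_integral continuous_at_imp_continuous_on) blast+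
    show "continuous_on {0..x} \<phi>"
      unfolding \<phi>_def by (intro continuous_intros) simp
    fix t
    assume t: "0 < t" "t < x"
    show "(D has_real_derivative
        8 / pi * exp (- (t\<^sup>2)) * (gauss_integral_approx n t - gauss_integral t)) (at t)"
      unfolding D_def [abs_def]
      using radicand_has_real_derivative gauss_integral_has_real_derivative t
      by (auto intro!: derivative_eq_intros simp: field_simps)
    show "(\<phi> has_real_derivative 8 / pi * c * (t * exp (- (t\<^sup>2) / 4))) (at t)"
      unfolding \<phi>_def [abs_def] by (auto intro!: derivative_eq_intros simp: algebra_simps)
    have "exp (- (t\<^sup>2)) * \<bar>gauss_integral t - gauss_integral_approx n t\<bar>
        \<le> exp (- (t\<^sup>2)) * (t * (t\<^sup>2 / 4) ^ Suc n * exp (Suc n) / real (Suc n) ^ Suc n)"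
      using abs_gauss_integral_minus_approx_le [of t n] t by (intro mult_left_mono) auto
    also have "\<dots> \<le> c * (t * exp (- (t\<^sup>2) / 4))"
      using gauss_weight_le [of "Suc n" t] t by (simp add: c_def mult_ac)
    finally show "\<bar>8 / pi * exp (- (t\<^sup>2)) * (gauss_integral_approx n t - gauss_integral t)\<bar>
        \<le> 8 / pi * c * (t * exp (- (t\<^sup>2) / 4))"
      by (auto simp: abs_mult abs_minus_commute mult.assoc intro!: divide_right_mono)
  qed
  moreover have "\<phi> x - \<phi> 0 \<le> 16 / pi * c"
    by (simp add: \<phi>_def c_def)
  moreover have "D x - D 0 = radicand n x - (erf x)\<^sup>2"
    by (simp add: D_def radicand_at_0 erf_eq_gauss_integral power_divide power_mult_distrib)
  ultimately show ?thesis
    by (simp add: c_def)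
qed

lemma abs_sqrt_diff_le:
  fixes a b :: real
  assumes "b \<ge> 0"
  shows "\<bar>sqrt a - sqrt b\<bar> \<le> sqrt (2 * \<bar>a - b\<bar>)"
proof -
  have "(sqrt a - sqrt b)\<^sup>2 \<le> 2 * \<bar>a - b\<bar>"
  proof (cases "a \<ge> 0")
    case True
    have "(sqrt a - sqrt b)\<^sup>2 = \<bar>sqrt a - sqrt b\<bar> * \<bar>sqrt a - sqrt b\<bar>"
      by (simp add: power2_eq_square)
    also have "\<dots> \<le> \<bar>sqrt a - sqrt b\<bar> * (sqrt a + sqrt b)"
      using True assms by (intro mult_left_mono) (auto simp: abs_le_iff)
    also have "\<dots> = \<bar>(sqrt a - sqrt b) * (sqrt a + sqrt b)\<bar>"
      using True assms by (simp add: abs_mult)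
    also have "(sqrt a - sqrt b) * (sqrt a + sqrt b) = a - b"
      using True assms by (simp add: algebra_simps)
    finally show ?thesis
      by (rule order_trans) simp
  next
    case False
    then have "(sqrt a - sqrt b)\<^sup>2 = (sqrt (- a) + sqrt b)\<^sup>2"
      by (simp add: real_sqrt_minus power2_eq_square algebra_simps)
    also have "\<dots> \<le> 2 * ((sqrt (- a))\<^sup>2 + (sqrt b)\<^sup>2)"
      using sum_squares_ge_zero [of "sqrt (- a) - sqrt b" 0] by (simp add: power2_eq_square algebra_simps)
    also have "\<dots> = 2 * \<bar>a - b\<bar>"
      using False assms by simp
    finally show ?thesis .
  qed
  then show ?thesis
    using real_sqrt_le_mono by fastforce
qed

lemma erf_nonneg: "erf x \<ge> 0"
  by (simp add: erf_eq_gauss_integral gauss_integral_nonneg)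

lemma abs_f_n_minus_erf_le:
  assumes "x \<ge> 0"
  shows "\<bar>f_n n x - erf x\<bar> \<le> sqrt (32 / pi * (1 / 3) ^ Suc n)"
proof -
  have "\<bar>f_n n x - erf x\<bar> = \<bar>sqrt (radicand n x) - sqrt ((erf x)\<^sup>2)\<bar>"
    by (simp add: f_n_def radicand_def erf_nonneg)
  also have "\<dots> \<le> sqrt (2 * \<bar>radicand n x - (erf x)\<^sup>2\<bar>)"
    by (rule abs_sqrt_diff_le) simp
  also have "\<dots> \<le> sqrt (32 / pi * (1 / 3) ^ Suc n)"
    using abs_radicand_minus_erf_sq_le [OF assms, of n] by simp
  finally show ?thesis .
qed

lemma uniform_limit_by_majorant:
  fixes f :: "nat \<Rightarrow> 'a \<Rightarrow> 'b::metric_space"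
  assumes "\<delta> \<longlonglongrightarrow> 0" and "\<And>n x. x \<in> S \<Longrightarrow> dist (f n x) (g x) \<le> \<delta> n"
  shows "uniform_limit S f g sequentially"
proof (rule uniform_limitI)
  fix e :: real
  assume "e > 0"
  with \<open>\<delta> \<longlonglongrightarrow> 0\<close> have "\<forall>\<^sub>F n in sequentially. \<delta> n < e"
    by (rule order_tendstoD)
  then show "\<forall>\<^sub>F n in sequentially. \<forall>x\<in>S. dist (f n x) (g x) < e"
    by eventually_elim (use assms(2) in \<open>blast intro: le_less_trans\<close>)
qed

theorem theorem6p1:
  shows "(\<forall>x::real. x \<ge> 0 \<longrightarrow> (\<lambda>n. f_n n x) \<longlonglongrightarrow> erf x)
         \<and> uniform_limit {0::real..} f_n erf sequentially"
proof -
  have bound: "dist (f_n n x) (erf x) \<le> sqrt (32 / pi * (1 / 3) ^ Suc n)" if "x \<in> {0..}" for n x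
    using abs_f_n_minus_erf_le that by (simp add: dist_real_def)
  have "(\<lambda>n. sqrt (32 / pi * (1 / 3 :: real) ^ Suc n)) \<longlonglongrightarrow> sqrt (32 / pi * 0)"
    by (intro tendsto_intros LIMSEQ_power_zero [THEN LIMSEQ_Suc]) simp
  then have "(\<lambda>n. sqrt (32 / pi * (1 / 3 :: real) ^ Suc n)) \<longlonglongrightarrow> 0"
    by (simp only: mult_zero_right real_sqrt_zero)
  then have uniform: "uniform_limit {0::real..} f_n erf sequentially"
    using bound by (rule uniform_limit_by_majorant)
  then show ?thesis
    by (auto intro: tendsto_uniform_limitI [OF uniform])
qed

end
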